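(* Let $\langle A,\to\rangle$ be a conditional algebra. Then for all $U,V\subseteq\mathrm{Ul}(A)$, $$U\to_{T_A}V=\bigcap_{(Y,O)}\ \bigcup_{\substack{a,b\in A\\ Y\subseteq\varphi(a),\ \varphi(b)\subseteq O}}\varphi(a\to b),$$ where $(Y,O)$ ranges over all pairs with $Y$ a closed subset of the Stone space of $A$ with $Y\subseteq U$ and $O$ an open subset with $V\subseteq O$; i.e., $\to_{T_A}$ is the $\pi$-extension of $\to$ to the canonical extension $\mathcal{P}(\mathrm{Ul}(A))$ of $A$. Moreover, $\langle\mathcal{P}(\mathrm{Ul}(A)),\to_{T_A}\rangle$ is a conditional algebra, so the variety of conditional algebras is closed under canonical extensions.
   Context: A conditional algebra is a pair $\langle A,\to\rangle$ where $A$ is a Boolean algebra and $\to$ is a binary operation on $A$ such that for all $a,b,c$: $a\to 1=1$; $(a\to b)\wedge(a\to c)=a\to(b\wedge c)$; $(a\vee b)\to c\le (a\to c)\wedge(b\to c)$. $\mathrm{Ul}(A)$ is the set of ultrafilters of $A$ with the Stone topology, $\varphi(a)=\{u: a\in u\}$. Filters include the improper filter $A$, and for a filter $F$, $\varphi(F)=\{u\in\mathrm{Ul}(A): F\subseteq u\}$. For $X,Y\subseteq A$, $D^{\to}_X(Y)=\{b\in A:\exists a\in Y,\ a\to b\in X\}$. $T_A(u,Z,v)$ holds iff there is a filter $F$ with $Z=\varphi(F)$ and $D^{\to}_u(F)\subseteq v$; $T_A(u,Z)=\{v:T_A(u,Z,v)\}$. For $U,V\subseteq\mathrm{Ul}(A)$,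 $U\to_{T_A}V=\{u: \text{for all } Z\subseteq U,\ T_A(u,Z)\subseteq V\}$. The canonical extension of $A$ is identified with $\mathcal{P}(\mathrm{Ul}(A))$ via $\varphi$. *)

theory Defs
  imports Main
begin

definition cond_alg :: "('a::boolean_algebra \<Rightarrow> 'a \<Rightarrow> 'a) \<Rightarrow> bool" where
  "cond_alg imp \<longleftrightarrow>
     (\<forall>a. imp a top = top) \<and>
     (\<forall>a b c. inf (imp a b) (imp a c) = imp a (inf b c)) \<and>
     (\<forall>a b c. imp (sup a b) c \<le> inf (imp a c) (imp b c))"

text \<open>Conditional algebra structure on the power set Boolean algebra P(X)
  (top = X, meet = intersection, join = union).\<close>
definition cond_alg_powerset :: "'b set \<Rightarrow> ('b set \<Rightarrow> 'b set \<Rightarrow> 'b set) \<Rightarrow> bool" where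
  "cond_alg_powerset X imp \<longleftrightarrow>
     (\<forall>U V. U \<subseteq> X \<and> V \<subseteq> X \<longrightarrow> imp U V \<subseteq> X) \<and>
     (\<forall>U. U \<subseteq> X \<longrightarrow> imp U X = X) \<and>
     (\<forall>U V W. U \<subseteq> X \<and> V \<subseteq> X \<and> W \<subseteq> X \<longrightarrow> imp U V \<inter> imp U W = imp U (V \<inter> W)) \<and>
     (\<forall>U V W. U \<subseteq> X \<and> V \<subseteq> X \<and> W \<subseteq> X \<longrightarrow> imp (U \<union> V) W \<subseteq> imp U W \<inter> imp V W)"

text \<open>Filters (the improper filter UNIV is allowed).\<close>
definition is_filter :: "'a::boolean_algebra set \<Rightarrow> bool" where
  "is_filter F \<longleftrightarrow> top \<in> F \<and> (\<forall>a\<in>F. \<forall>b. a \<le> b \<longrightarrow> b \<in> F) \<and>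
     (\<forall>a\<in>F. \<forall>b\<in>F. inf a b \<in> F)"

definition is_ultrafilter :: "'a::boolean_algebra set \<Rightarrow> bool" where
  "is_ultrafilter u \<longleftrightarrow> is_filter u \<and> u \<noteq> UNIV \<and>
     (\<forall>G. is_filter G \<and> G \<noteq> UNIV \<and> u \<subseteq> G \<longrightarrow> G = u)"

definition Ul :: "'a::boolean_algebra set set" where
  "Ul = {u. is_ultrafilter u}"

definition phi :: "'a::boolean_algebra \<Rightarrow> 'a set set" where
  "phi a = {u \<in> Ul. a \<in> u}"

definition phiF :: "'a::boolean_algebra set \<Rightarrow> 'a set set" where
  "phiF F = {u \<in> Ul. F \<subseteq> u}"

definition stone_open :: "'a::boolean_algebra set set \<Rightarrow> bool" where
  "stone_open W \<longleftrightarrow> W \<subseteq> Ul \<and> (\<forall>u\<in>W. \<exists>a. u \<in> phi a \<and> phi a \<subseteq> W)"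

definition stone_closed :: "'a::boolean_algebra set set \<Rightarrow> bool" where
  "stone_closed Y \<longleftrightarrow> Y \<subseteq> Ul \<and> stone_open (Ul - Y)"

definition D_imp :: "('a \<Rightarrow> 'a \<Rightarrow> 'a) \<Rightarrow> 'a set \<Rightarrow> 'a set \<Rightarrow> 'a set" where
  "D_imp imp X Y = {b. \<exists>a\<in>Y. imp a b \<in> X}"

definition T_rel :: "('a::boolean_algebra \<Rightarrow> 'a \<Rightarrow> 'a) \<Rightarrow> 'a set \<Rightarrow> 'a set set \<Rightarrow> 'a set \<Rightarrow> bool" where
  "T_rel imp u Z v \<longleftrightarrow> (\<exists>F. is_filter F \<and> Z = phiF F \<and> D_imp imp u F \<subseteq> v)"

definition T_img :: "('a::boolean_algebra \<Rightarrow> 'a \<Rightarrow> 'a) \<Rightarrow> 'a set \<Rightarrow> 'a set set \<Rightarrow> 'a set set" where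
  "T_img imp u Z = {v \<in> Ul. T_rel imp u Z v}"

definition imp_T :: "('a::boolean_algebra \<Rightarrow> 'a \<Rightarrow> 'a) \<Rightarrow> 'a set set \<Rightarrow> 'a set set \<Rightarrow> 'a set set" where
  "imp_T imp U V = {u \<in> Ul. \<forall>Z. Z \<subseteq> U \<longrightarrow> T_img imp u Z \<subseteq> V}"

end

theory Submission
  imports Defs
begin

(* A closed subset Y of the Stone space is phiF F for exactly one filter F, namely
  filter_of Y = {a. Y \<subseteq> phi a}.  Hence T_A(u, Y) is the closed set phiF (D_u(filter_of Y)),
  and u \<in> U \<rightarrow>_T V says that this set lies in V for every closed Y \<subseteq> U.  By compactness,
  a closed set phiF D lies in V iff every open W \<supseteq> V contains phi b for some b \<in> D (for the
  converse take W = Ul - {v}); unfolding D_u(filter_of Y) turns this into the pi-extension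
  formula.  That \<rightarrow>_T is a conditional operation on the power set needs no hypothesis on
  \<rightarrow> at all: it is the operation induced by the relation T_A. *)

section \<open>Filters and ultrafilters of a Boolean algebra\<close>

lemma is_filter_top: "is_filter F \<Longrightarrow> top \<in> F"
  by (simp add: is_filter_def)

lemma is_filter_up: "is_filter F \<Longrightarrow> a \<in> F \<Longrightarrow> a \<le> b \<Longrightarrow> b \<in> F"
  by (auto simp add: is_filter_def)

lemma is_filter_inf: "is_filter F \<Longrightarrow> a \<in> F \<Longrightarrow> b \<in> F \<Longrightarrow> inf a b \<in> F"
  by (auto simp add: is_filter_def)

lemma is_filter_proper_iff: "is_filter F \<Longrightarrow> F \<noteq> UNIV \<longleftrightarrow> bot \<notin> F"
  using is_filter_up by fastforce

lemma is_filter_principal: "is_filter {x. c \<le> x}"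
  by (auto simp add: is_filter_def)

definition filter_join :: "'a::boolean_algebra set \<Rightarrow> 'a set \<Rightarrow> 'a set" where
  "filter_join F G = {x. \<exists>f\<in>F. \<exists>g\<in>G. inf f g \<le> x}"

lemma is_filter_filter_join:
  assumes F: "is_filter F" and G: "is_filter G"
  shows "is_filter (filter_join F G)"
  unfolding is_filter_def
proof (intro conjI ballI allI impI)
  show "top \<in> filter_join F G"
    using F G by (auto simp: filter_join_def intro: is_filter_top)
next
  fix a b assume "a \<in> filter_join F G" "a \<le> b"
  then show "b \<in> filter_join F G"
    unfolding filter_join_def by (blast intro: order_trans)
next
  fix a b assume "a \<in> filter_join F G" "b \<in> filter_join F G"
  then obtain f g f' g' where fg: "f \<in> F" "g \<in> G" "inf f g \<le> a"
    and fg': "f' \<in> F" "g' \<in> G" "inf f' g' \<le> b"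
    unfolding filter_join_def by blast
  have "inf (inf f f') (inf g g') = inf (inf f g) (inf f' g')"
    by (simp add: inf_aci)
  also have "\<dots> \<le> inf a b"
    using fg(3) fg'(3) by (rule inf_mono)
  finally show "inf a b \<in> filter_join F G"
    unfolding filter_join_def using fg fg' F G by (blast intro: is_filter_inf)
qed

lemma filter_join_upper1: "is_filter G \<Longrightarrow> F \<subseteq> filter_join F G"
  unfolding filter_join_def by (force dest: is_filter_top)

lemma filter_join_upper2: "is_filter F \<Longrightarrow> G \<subseteq> filter_join F G"
  unfolding filter_join_def by (force dest: is_filter_top)

lemma bot_in_filter_join_iff:
  "bot \<in> filter_join F G \<longleftrightarrow> (\<exists>f\<in>F. \<exists>g\<in>G. inf f g = bot)"
  unfolding filter_join_def by (simp add: bot_unique)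

lemma ultrafilter_exists:
  assumes F: "is_filter F" and proper: "bot \<notin> F"
  shows "\<exists>u\<in>Ul. F \<subseteq> u"
proof -
  let ?A = "{G. is_filter G \<and> bot \<notin> G \<and> F \<subseteq> G}"
  have "\<Union>C \<in> ?A" if "C \<noteq> {}" and C: "subset.chain ?A C" for C
  proof -
    have CA: "C \<subseteq> ?A" and lin: "\<forall>X\<in>C. \<forall>Y\<in>C. X \<subseteq> Y \<or> Y \<subseteq> X"
      using C by (auto simp: subset_chain_def)
    have "is_filter (\<Union>C)"
      unfolding is_filter_def
    proof (intro conjI ballI allI impI)
      show "top \<in> \<Union>C"
        using \<open>C \<noteq> {}\<close> CA is_filter_top by blast
    next
      fix a b assume "a \<in> \<Union>C" "a \<le> b"
      then show "b \<in> \<Union>C"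
        using CA is_filter_up by blast
    next
      fix a b assume "a \<in> \<Union>C" "b \<in> \<Union>C"
      then obtain X where "X \<in> C" "a \<in> X" "b \<in> X"
        using lin by blast
      then show "inf a b \<in> \<Union>C"
        using CA is_filter_inf by blast
    qed
    then show ?thesis
      using \<open>C \<noteq> {}\<close> CA by blast
  qed
  moreover have "F \<in> ?A"
    using F proper by blast
  ultimately obtain M where M: "M \<in> ?A" and max: "\<forall>X\<in>?A. M \<subseteq> X \<longrightarrow> X = M"
    using subset_Zorn_nonempty[of ?A] by blast
  have "is_ultrafilter M"
    unfolding is_ultrafilter_def using M max is_filter_proper_iff by blast
  with M show ?thesis
    by (auto simp: Ul_def)
qed

lemma ultrafilter_extends_filters:
  assumes F: "is_filter F" and G: "is_filter G"
    and compatible: "\<And>f g. f \<in> F \<Longrightarrow> g \<in> G \<Longrightarrow> inf f g \<noteq> bot"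
  shows "\<exists>u\<in>Ul. F \<subseteq> u \<and> G \<subseteq> u"
proof -
  have "bot \<notin> filter_join F G"
    using compatible by (simp add: bot_in_filter_join_iff)
  then obtain u where "u \<in> Ul" "filter_join F G \<subseteq> u"
    using ultrafilter_exists[OF is_filter_filter_join[OF F G]] by blast
  moreover have "F \<subseteq> filter_join F G" "G \<subseteq> filter_join F G"
    using filter_join_upper1[OF G] filter_join_upper2[OF F] .
  ultimately show ?thesis
    by blast
qed

lemma ultrafilter_extends_filter_with_elem:
  assumes F: "is_filter F" and compatible: "\<And>f. f \<in> F \<Longrightarrow> inf f c \<noteq> bot"
  shows "\<exists>u\<in>Ul. F \<subseteq> u \<and> c \<in> u"
proof -
  have "inf f g \<noteq> bot" if "f \<in> F" "g \<in> {x. c \<le> x}" for f g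
  proof -
    have "inf f c \<le> inf f g"
      using that by (simp add: le_infI2)
    with compatible[OF \<open>f \<in> F\<close>] show ?thesis
      by (metis bot_unique)
  qed
  from ultrafilter_extends_filters[OF F is_filter_principal this]
  show ?thesis
    by blast
qed

lemma Ul_is_filter: "u \<in> Ul \<Longrightarrow> is_filter u"
  by (simp add: Ul_def is_ultrafilter_def)

lemma Ul_bot_notin:
  assumes "u \<in> Ul"
  shows "bot \<notin> u"
proof -
  have "is_filter u" "u \<noteq> UNIV"
    using assms by (simp_all add: Ul_def is_ultrafilter_def)
  then show ?thesis
    using is_filter_proper_iff by blast
qed

lemma Ul_subset_eq: "u \<in> Ul \<Longrightarrow> v \<in> Ul \<Longrightarrow> u \<subseteq> v \<Longrightarrow> u = v"
  by (auto simp: Ul_def is_ultrafilter_def)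

lemma Ul_inf_iff:
  assumes "u \<in> Ul"
  shows "inf a b \<in> u \<longleftrightarrow> a \<in> u \<and> b \<in> u"
  using is_filter_up[OF Ul_is_filter[OF assms] _ inf_le1, of a b]
    is_filter_up[OF Ul_is_filter[OF assms] _ inf_le2, of a b]
    is_filter_inf[OF Ul_is_filter[OF assms], of a b]
  by blast

lemma Ul_compl_iff:
  assumes u: "u \<in> Ul"
  shows "- a \<in> u \<longleftrightarrow> a \<notin> u"
proof
  assume "- a \<in> u"
  then show "a \<notin> u"
    using u Ul_bot_notin Ul_inf_iff[OF u, of a "- a"] by auto
next
  assume a: "a \<notin> u"
  have "\<exists>f\<in>u. inf f a = bot"
  proof (rule ccontr)
    assume "\<not> ?thesis"
    then obtain v where "v \<in> Ul" "u \<subseteq> v" "a \<in> v"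
      using ultrafilter_extends_filter_with_elem[OF Ul_is_filter[OF u]] by blast
    then show False
      using a u Ul_subset_eq by blast
  qed
  then obtain f where "f \<in> u" "f \<le> - a"
    by (auto simp: inf_shunt)
  then show "- a \<in> u"
    using u Ul_is_filter is_filter_up by blast
qed

section \<open>The Stone space\<close>

lemma mem_phi_iff: "u \<in> phi a \<longleftrightarrow> u \<in> Ul \<and> a \<in> u"
  by (simp add: phi_def)

lemma phi_subset_Ul: "phi a \<subseteq> Ul"
  by (auto simp: phi_def)

lemma phi_top: "phi top = Ul"
  by (auto simp: phi_def intro: is_filter_top Ul_is_filter)

lemma phi_inf: "phi (inf a b) = phi a \<inter> phi b"
  by (auto simp: phi_def Ul_inf_iff)

lemma phi_compl: "phi (- a) = Ul - phi a"
  by (auto simp: phi_def Ul_compl_iff)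

lemma phi_mono: "a \<le> b \<Longrightarrow> phi a \<subseteq> phi b"
  by (metis le_iff_inf phi_inf)

definition filter_of :: "'a::boolean_algebra set set \<Rightarrow> 'a set" where
  "filter_of C = {a. C \<subseteq> phi a}"

lemma is_filter_filter_of: "C \<subseteq> Ul \<Longrightarrow> is_filter (filter_of C)"
  unfolding is_filter_def filter_of_def
  by (auto simp: phi_top phi_inf) (use phi_mono in blast)

lemma stone_closed_phiF: "stone_closed (phiF F)"
  unfolding stone_closed_def stone_open_def
proof (intro conjI ballI)
  show "phiF F \<subseteq> Ul"
    by (auto simp: phiF_def)
  fix w assume w: "w \<in> Ul - phiF F"
  then obtain a where "a \<in> F" "a \<notin> w"
    by (auto simp: phiF_def)
  then have "w \<in> phi (- a)" "phi (- a) \<subseteq> Ul - phiF F"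
    using w by (auto simp: phi_def phiF_def Ul_compl_iff)
  then show "\<exists>b. w \<in> phi b \<and> phi b \<subseteq> Ul - phiF F"
    by blast
qed simp

lemma phiF_subset_phi_iff:
  assumes F: "is_filter F"
  shows "phiF F \<subseteq> phi a \<longleftrightarrow> a \<in> F"
proof
  assume sub: "phiF F \<subseteq> phi a"
  show "a \<in> F"
  proof (rule ccontr)
    assume "a \<notin> F"
    then have "inf f (- a) \<noteq> bot" if "f \<in> F" for f
      using that F is_filter_up by (fastforce simp: inf_shunt)
    then obtain u where u: "u \<in> Ul" "F \<subseteq> u" "- a \<in> u"
      using ultrafilter_extends_filter_with_elem[OF F] by blast
    then have "u \<in> phi a"
      using sub by (auto simp: phiF_def)
    with u show False
      by (auto simp: phi_def Ul_compl_iff)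
  qed
qed (auto simp: phiF_def phi_def)

lemma filter_of_phiF: "is_filter F \<Longrightarrow> filter_of (phiF F) = F"
  by (auto simp: filter_of_def phiF_subset_phi_iff)

lemma phiF_filter_of:
  assumes C: "stone_closed C"
  shows "phiF (filter_of C) = C"
proof
  have CU: "C \<subseteq> Ul" and op: "stone_open (Ul - C)"
    using C by (auto simp: stone_closed_def)
  show "phiF (filter_of C) \<subseteq> C"
  proof
    fix u assume u: "u \<in> phiF (filter_of C)"
    show "u \<in> C"
    proof (rule ccontr)
      assume "u \<notin> C"
      then obtain a where "u \<in> phi a" "phi a \<subseteq> Ul - C"
        using u op unfolding phiF_def stone_open_def by blast
      moreover have "C \<subseteq> phi (- a)"
        using \<open>phi a \<subseteq> Ul - C\<close> CU by (auto simp: phi_compl)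
      then have "- a \<in> u"
        using u by (auto simp: phiF_def filter_of_def)
      ultimately show False
        using u by (auto simp: phi_def Ul_compl_iff)
    qed
  qed
  show "C \<subseteq> phiF (filter_of C)"
    using CU by (auto simp: phiF_def filter_of_def phi_def)
qed

lemma stone_open_Ul: "stone_open Ul"
  unfolding stone_open_def using phi_top by blast

lemma stone_open_Ul_minus_singleton:
  assumes v: "v \<in> Ul"
  shows "stone_open (Ul - {v})"
  unfolding stone_open_def
proof (intro conjI ballI)
  fix w assume w: "w \<in> Ul - {v}"
  then obtain a where "a \<in> w" "a \<notin> v"
    using v Ul_subset_eq by blast
  then show "\<exists>a. w \<in> phi a \<and> phi a \<subseteq> Ul - {v}"
    using w by (auto simp: phi_def)
qed blast

lemma phiF_subset_stone_open_imp_phi_subset: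
  assumes D: "is_filter D" and W: "stone_open W" and sub: "phiF D \<subseteq> W"
  shows "\<exists>b\<in>D. phi b \<subseteq> W"
proof (rule ccontr)
  assume none: "\<not> ?thesis"
  let ?H = "filter_of (Ul - W)"
  have "stone_closed (Ul - W)"
    using W by (auto simp: stone_closed_def stone_open_def Diff_Diff_Int inf.absorb2)
  then have HW: "phiF ?H = Ul - W"
    by (rule phiF_filter_of)
  have H: "is_filter ?H"
    using is_filter_filter_of[OF Diff_subset] .
  have "inf d h \<noteq> bot" if "d \<in> D" "h \<in> ?H" for d h
  proof -
    obtain v where "v \<in> phi d" "v \<notin> W"
      using none \<open>d \<in> D\<close> by blast
    moreover have "v \<in> phi h"
      using \<open>h \<in> ?H\<close> \<open>v \<in> phi d\<close> \<open>v \<notin> W\<close> phi_subset_Ul by (auto simp: filter_of_def)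
    ultimately have "v \<in> phi (inf d h)"
      by (simp add: phi_inf)
    then show ?thesis
      by (auto simp: phi_def Ul_bot_notin)
  qed
  then obtain u where "u \<in> Ul" "D \<subseteq> u" "?H \<subseteq> u"
    using ultrafilter_extends_filters[OF D H] by blast
  then show False
    using sub HW by (auto simp: phiF_def)
qed

lemma phiF_subset_iff_open_supersets:
  assumes D: "is_filter D" and V: "V \<subseteq> Ul"
  shows "phiF D \<subseteq> V \<longleftrightarrow> (\<forall>W. stone_open W \<and> V \<subseteq> W \<longrightarrow> (\<exists>b\<in>D. phi b \<subseteq> W))"
proof (intro iffI allI impI)
  fix W assume "phiF D \<subseteq> V" "stone_open W \<and> V \<subseteq> W"
  then show "\<exists>b\<in>D. phi b \<subseteq> W"
    using phiF_subset_stone_open_imp_phi_subset[OF D] by blast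
next
  assume opens: "\<forall>W. stone_open W \<and> V \<subseteq> W \<longrightarrow> (\<exists>b\<in>D. phi b \<subseteq> W)"
  show "phiF D \<subseteq> V"
  proof
    fix v assume v: "v \<in> phiF D"
    show "v \<in> V"
    proof (rule ccontr)
      assume "v \<notin> V"
      have "v \<in> Ul"
        using v by (simp add: phiF_def)
      then have "stone_open (Ul - {v}) \<and> V \<subseteq> Ul - {v}"
        using V \<open>v \<notin> V\<close> stone_open_Ul_minus_singleton by blast
      then obtain b where "b \<in> D" "phi b \<subseteq> Ul - {v}"
        using opens by blast
      then show False
        using v by (auto simp: phiF_def phi_def)
    qed
  qed
qed

section \<open>The operation \<open>\<rightarrow>\<^sub>T\<close>\<close>

lemma cond_alg_imp_mono:
  assumes "cond_alg imp" "b \<le> c"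
  shows "imp a b \<le> imp a c"
proof -
  have "imp a b = imp a (inf b c)"
    using assms(2) by (simp add: inf_absorb1)
  also have "\<dots> = inf (imp a b) (imp a c)"
    using assms(1) by (simp add: cond_alg_def)
  finally show ?thesis
    by (rule inf.orderI)
qed

lemma cond_alg_imp_antimono:
  assumes "cond_alg imp" "a \<le> a'"
  shows "imp a' c \<le> imp a c"
proof -
  have "imp a' c = imp (sup a a') c"
    using assms(2) by (simp add: sup_absorb2)
  also have "\<dots> \<le> inf (imp a c) (imp a' c)"
    using assms(1) by (simp add: cond_alg_def)
  finally show ?thesis
    by simp
qed

lemma is_filter_D_imp:
  assumes imp: "cond_alg imp" and u: "is_filter u" and F: "is_filter F"
  shows "is_filter (D_imp imp u F)"
  unfolding is_filter_def D_imp_def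
proof (intro conjI ballI allI impI CollectI)
  show "\<exists>a\<in>F. imp a top \<in> u"
    using imp u F by (auto simp: cond_alg_def intro: is_filter_top)
next
  fix x y assume "x \<in> {b. \<exists>a\<in>F. imp a b \<in> u}" "x \<le> y"
  then show "\<exists>a\<in>F. imp a y \<in> u"
    using imp u cond_alg_imp_mono is_filter_up by blast
next
  fix x y assume "x \<in> {b. \<exists>a\<in>F. imp a b \<in> u}" "y \<in> {b. \<exists>a\<in>F. imp a b \<in> u}"
  then obtain a a' where a: "a \<in> F" "imp a x \<in> u" and a': "a' \<in> F" "imp a' y \<in> u"
    by blast
  have "imp (inf a a') x \<in> u" "imp (inf a a') y \<in> u"
    using a(2) a'(2) u cond_alg_imp_antimono[OF imp] is_filter_up by (meson inf_le1 inf_le2)+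
  then have "inf (imp (inf a a') x) (imp (inf a a') y) \<in> u"
    using u is_filter_inf by blast
  then have "imp (inf a a') (inf x y) \<in> u"
    using imp by (simp add: cond_alg_def)
  moreover have "inf a a' \<in> F"
    using a a' F is_filter_inf by blast
  ultimately show "\<exists>a\<in>F. imp a (inf x y) \<in> u"
    by blast
qed

lemma T_rel_stone_closed_iff:
  assumes Z: "stone_closed Z"
  shows "T_rel imp u Z v \<longleftrightarrow> D_imp imp u (filter_of Z) \<subseteq> v"
proof
  assume "T_rel imp u Z v"
  then obtain F where "is_filter F" "Z = phiF F" "D_imp imp u F \<subseteq> v"
    unfolding T_rel_def by blast
  then show "D_imp imp u (filter_of Z) \<subseteq> v"
    by (simp add: filter_of_phiF)
next
  have "is_filter (filter_of Z)"
    using Z by (simp add: stone_closed_def is_filter_filter_of)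
  moreover assume "D_imp imp u (filter_of Z) \<subseteq> v"
  ultimately show "T_rel imp u Z v"
    unfolding T_rel_def using phiF_filter_of[OF Z] by metis
qed

lemma T_img_subset_iff:
  "T_img imp u Z \<subseteq> V \<longleftrightarrow> (stone_closed Z \<longrightarrow> phiF (D_imp imp u (filter_of Z)) \<subseteq> V)"
proof (cases "stone_closed Z")
  case True
  then show ?thesis
    by (simp add: T_img_def phiF_def T_rel_stone_closed_iff)
next
  case False
  then have "T_img imp u Z = {}"
    unfolding T_img_def T_rel_def using stone_closed_phiF by blast
  with False show ?thesis
    by simp
qed

lemma mem_imp_T_iff:
  assumes imp: "cond_alg imp" and V: "V \<subseteq> Ul"
  shows "u \<in> imp_T imp U V \<longleftrightarrow>
    (\<forall>Y W. stone_closed Y \<and> Y \<subseteq> U \<and> stone_open W \<and> V \<subseteq> W \<longrightarrow>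
       (\<exists>a b. Y \<subseteq> phi a \<and> phi b \<subseteq> W \<and> u \<in> phi (imp a b)))"
proof (cases "u \<in> Ul")
  case True
  have "phiF (D_imp imp u (filter_of Y)) \<subseteq> V \<longleftrightarrow>
        (\<forall>W. stone_open W \<and> V \<subseteq> W \<longrightarrow> (\<exists>a b. Y \<subseteq> phi a \<and> phi b \<subseteq> W \<and> u \<in> phi (imp a b)))"
    if "stone_closed Y" for Y
  proof -
    have D: "is_filter (D_imp imp u (filter_of Y))"
      using True that
      by (simp add: stone_closed_def is_filter_D_imp[OF imp] Ul_is_filter is_filter_filter_of)
    show ?thesis
      using phiF_subset_iff_open_supersets[OF D V] True
      unfolding D_imp_def filter_of_def mem_phi_iff by blast
  qed
  with True show ?thesis
    by (auto simp: imp_T_def T_img_subset_iff)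
next
  case False
  \<comment> \<open>the pair (Y, W) = ({}, Ul) forces u \<in> Ul on the right-hand side\<close>
  have "stone_closed {} \<and> {} \<subseteq> U \<and> stone_open Ul \<and> V \<subseteq> Ul"
    using V by (simp add: stone_closed_def stone_open_Ul)
  with False show ?thesis
    by (auto simp: imp_T_def mem_phi_iff)
qed

lemma imp_T_eq_pi_extension:
  assumes imp: "cond_alg imp" and V: "V \<subseteq> Ul"
  shows "imp_T imp U V =
    (\<Inter>(Y, W) \<in> {(Y, W). stone_closed Y \<and> Y \<subseteq> U \<and> stone_open W \<and> V \<subseteq> W}.
       \<Union>(a, b) \<in> {(a, b). Y \<subseteq> phi a \<and> phi b \<subseteq> W}. phi (imp a b))"
  by (auto simp: mem_imp_T_iff[OF imp V])

lemma cond_alg_powerset_imp_T: "cond_alg_powerset Ul (imp_T imp)"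
  unfolding cond_alg_powerset_def
proof (intro conjI allI impI)
  fix U V W :: "'a::boolean_algebra set set"
  show "imp_T imp U V \<subseteq> Ul" "imp_T imp U Ul = Ul"
    "imp_T imp U V \<inter> imp_T imp U W = imp_T imp U (V \<inter> W)"
    "imp_T imp (U \<union> V) W \<subseteq> imp_T imp U W \<inter> imp_T imp V W"
    unfolding imp_T_def T_img_def by blast+
qed

theorem theorem2p14:
  fixes imp :: "'a::boolean_algebra \<Rightarrow> 'a \<Rightarrow> 'a"
  assumes "cond_alg imp"
  shows "(\<forall>U V. U \<subseteq> Ul \<and> V \<subseteq> Ul \<longrightarrow>
            imp_T imp U V =
              (\<Inter>(Y, W) \<in> {(Y, W). stone_closed Y \<and> Y \<subseteq> U \<and> stone_open W \<and> V \<subseteq> W}.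
                 \<Union>(a, b) \<in> {(a, b). Y \<subseteq> phi a \<and> phi b \<subseteq> W}. phi (imp a b)))
         \<and> cond_alg_powerset Ul (imp_T imp)"
  by (simp add: imp_T_eq_pi_extension[OF assms] cond_alg_powerset_imp_T)

end
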